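(* Let $(G,+,0,\ge)$ be a linearly ordered Abelian group and let $n$ be a natural number. Then every nonnegative sum-symmetric matrix $T\in G^{n\times n}$ is the sum of finitely many nonnegative circuit matrices in $G^{n\times n}$.
   Context: A linearly ordered Abelian group is an Abelian group $(G,+,0)$ with a linear (total) order $\ge$ on $G$ such that for all $a,b\in G$ one has $a\ge b$ if and only if $a-b\ge 0$. Write $[n]:=\{1,\dots,n\}$. A matrix $T=(t_{ij})_{i,j\in[n]}\in G^{n\times n}$ is nonnegative if all $t_{ij}\ge 0$. It is sum-symmetric if for each $i\in[n]$ the row sum $\sum_{j\in[n]}t_{ij}$ equals the column sum $\sum_{j\in[n]}t_{ji}$. A circuit matrix is a matrix $C^{J,\pi,c}=(c_{ij})_{i,j\in[n]}\in G^{n\times n}$ for which there exist $c\in G$, a set $J\subseteq[n]$ and a cyclic permutation $\pi$ of $J$ (a permutation of $J$ consisting of a single cycle through all elements of $J$) such that for all $i,j\in[n]$, $c_{ij}=c$ if $j=\pi(i)$ and $i\in J$, and $c_{ij}=0$ otherwise. The circuit matrix is nonnegative when $c\ge 0$. *)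

theory Defs
  imports "HOL-Combinatorics.Permutations"
begin

text \<open>Matrices in G^{n x n} are represented as functions nat => nat => 'a,
  of which only the entries with indices in {1..n} are relevant.\<close>

definition nonneg_matrix :: "nat \<Rightarrow> (nat \<Rightarrow> nat \<Rightarrow> 'a::linordered_ab_group_add) \<Rightarrow> bool" where
  "nonneg_matrix n T \<longleftrightarrow> (\<forall>i\<in>{1..n}. \<forall>j\<in>{1..n}. T i j \<ge> 0)"

definition sum_symmetric :: "nat \<Rightarrow> (nat \<Rightarrow> nat \<Rightarrow> 'a::linordered_ab_group_add) \<Rightarrow> bool" where
  "sum_symmetric n T \<longleftrightarrow>
     (\<forall>i\<in>{1..n}. (\<Sum>j\<in>{1..n}. T i j) = (\<Sum>j\<in>{1..n}. T j i))"

definition cyclic_perm_on :: "(nat \<Rightarrow> nat) \<Rightarrow> nat set \<Rightarrow> bool" where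
  "cyclic_perm_on \<pi> J \<longleftrightarrow> \<pi> permutes J \<and> (\<forall>x\<in>J. \<forall>y\<in>J. \<exists>k. (\<pi> ^^ k) x = y)"

definition circuit_matrix_with ::
  "nat \<Rightarrow> nat set \<Rightarrow> (nat \<Rightarrow> nat) \<Rightarrow> 'a::linordered_ab_group_add \<Rightarrow> (nat \<Rightarrow> nat \<Rightarrow> 'a) \<Rightarrow> bool" where
  "circuit_matrix_with n J \<pi> c C \<longleftrightarrow>
     J \<subseteq> {1..n} \<and> cyclic_perm_on \<pi> J \<and>
     (\<forall>i\<in>{1..n}. \<forall>j\<in>{1..n}. C i j = (if i \<in> J \<and> j = \<pi> i then c else 0))"

definition nonneg_circuit_matrix :: "nat \<Rightarrow> (nat \<Rightarrow> nat \<Rightarrow> 'a::linordered_ab_group_add) \<Rightarrow> bool" where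
  "nonneg_circuit_matrix n C \<longleftrightarrow> (\<exists>J \<pi> c. c \<ge> 0 \<and> circuit_matrix_with n J \<pi> c C)"

end

theory Submission
  imports Defs "HOL-Combinatorics.Orbits"
begin

text \<open>Since T is nonnegative and sum-symmetric, every index with positive in-flow also has positive
  out-flow. Following positive entries from such an index must eventually revisit an index, which
  yields a circuit J along which all entries of T are positive. Subtracting the circuit matrix
  whose weight is the minimum of T along J keeps T nonnegative and sum-symmetric and removes at
  least one entry from its support, so induction on the size of the support applies.\<close>

definition circuit_matrix :: "nat set \<Rightarrow> (nat \<Rightarrow> nat) \<Rightarrow> 'a::zero \<Rightarrow> nat \<Rightarrow> nat \<Rightarrow> 'a" where
  "circuit_matrix J \<pi> c = (\<lambda>i j. if i \<in> J \<and> j = \<pi> i then c else 0)"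

definition support :: "nat \<Rightarrow> (nat \<Rightarrow> nat \<Rightarrow> 'a::zero) \<Rightarrow> (nat \<times> nat) set" where
  "support n T = {(i, j) \<in> {1..n} \<times> {1..n}. T i j \<noteq> 0}"

lemma finite_support [simp]: "finite (support n T)"
  by (rule finite_subset[of _ "{1..n} \<times> {1..n}"]) (auto simp: support_def)

lemma orbit_subset_closed:
  assumes "x \<in> V" "f ` V \<subseteq> V"
  shows "orbit f x \<subseteq> V"
proof
  fix y assume "y \<in> orbit f x"
  then show "y \<in> V" by induction (use assms in auto)
qed

lemma periodic_point_exists:
  assumes "finite V" "v \<in> V" "f ` V \<subseteq> V"
  obtains x where "x \<in> V" "x \<in> orbit f x"
proof -
  have iter_in: "(f ^^ k) v \<in> V" for k
    by (induction k) (use assms in auto)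
  have "\<not> inj_on (\<lambda>k. (f ^^ k) v) {..card V}"
  proof
    assume "inj_on (\<lambda>k. (f ^^ k) v) {..card V}"
    from card_inj_on_le[OF this _ assms(1)] iter_in show False by fastforce
  qed
  then obtain a b where "a < b" and eq: "(f ^^ a) v = (f ^^ b) v"
    unfolding inj_on_def by (metis linorder_neqE_nat)
  then obtain d where "d > 0" "b = d + a"
    using less_imp_add_positive by (metis add.commute)
  with eq have "(f ^^ d) ((f ^^ a) v) = (f ^^ a) v"
    by (simp add: funpow_add)
  with \<open>d > 0\<close> have "(f ^^ a) v \<in> orbit f ((f ^^ a) v)"
    unfolding orbit_altdef by force
  with iter_in that show thesis by blast
qed

lemma cyclic_perm_on_perm_restrict:
  assumes "cyclic_on f S"
  shows "cyclic_perm_on (perm_restrict f S) S"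
proof -
  let ?\<pi> = "perm_restrict f S"
  have cyc: "cyclic_on ?\<pi> S"
    using assms by (simp add: cyclic_on_perm_restrict)
  have "S \<subseteq> ?\<pi> ` S"
  proof
    fix z assume "z \<in> S"
    then have "z \<in> orbit ?\<pi> z"
      using cyc by (simp add: cyclic_on_alldef)
    then obtain m where "z = ?\<pi> ((?\<pi> ^^ m) z)"
      unfolding orbit_altdef by (auto simp: gr0_conv_Suc)
    moreover have "(?\<pi> ^^ m) z \<in> S"
      using cyc \<open>z \<in> S\<close> by (rule cyclic_on_funpow_in)
    ultimately show "z \<in> ?\<pi> ` S"
      by (rule image_eqI)
  qed
  moreover have "?\<pi> ` S \<subseteq> S"
    using cyclic_on_inI[OF cyc] by blast
  ultimately have "?\<pi> ` S = S"
    by blast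
  then have "bij_betw ?\<pi> S S"
    using finite_surj_inj[OF finite_cyclic_on[OF assms]] by (simp add: bij_betw_def)
  then have "?\<pi> permutes S"
    by (rule bij_imp_permutes) (simp add: perm_restrict_simps)
  moreover have "\<exists>k. (?\<pi> ^^ k) y = z" if "y \<in> S" "z \<in> S" for y z
  proof -
    have "z \<in> orbit ?\<pi> y"
      using orbit_cyclic_eq3[OF cyc that(1)] that(2) by simp
    then show ?thesis
      unfolding orbit_altdef by blast
  qed
  ultimately show ?thesis
    unfolding cyclic_perm_on_def by blast
qed

lemma nonneg_circuit_matrix_circuit_matrix:
  assumes "J \<subseteq> {1..n}" "cyclic_perm_on \<pi> J" "c \<ge> 0"
  shows "nonneg_circuit_matrix n (circuit_matrix J \<pi> c)"
  unfolding nonneg_circuit_matrix_def circuit_matrix_with_def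
  using assms by (auto simp: circuit_matrix_def)

lemma row_sum_circuit_matrix:
  assumes "\<pi> permutes J" "J \<subseteq> I" "finite I"
  shows "(\<Sum>j\<in>I. circuit_matrix J \<pi> c i j) = (if i \<in> J then c else 0)"
proof (cases "i \<in> J")
  case True
  with assms have "\<pi> i \<in> I"
    by (auto simp: permutes_in_image)
  with True \<open>finite I\<close> show ?thesis
    by (simp add: circuit_matrix_def)
qed (simp add: circuit_matrix_def)

lemma column_sum_circuit_matrix:
  assumes "\<pi> permutes J" "J \<subseteq> I" "finite I"
  shows "(\<Sum>j\<in>I. circuit_matrix J \<pi> c j i) = (if i \<in> J then c else 0)"
proof (cases "i \<in> J")
  case True
  with assms have "inv \<pi> i \<in> I"
    by (auto simp: permutes_in_image permutes_inv)
  have "j \<in> J \<and> i = \<pi> j \<longleftrightarrow> j = inv \<pi> i" for j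
    using True assms(1) by (metis permutes_in_image permutes_inv_eq)
  with True \<open>inv \<pi> i \<in> I\<close> \<open>finite I\<close> show ?thesis
    by (simp add: circuit_matrix_def)
next
  case False
  then have "circuit_matrix J \<pi> c j i = 0" for j
    using assms(1) by (auto simp: circuit_matrix_def permutes_in_image)
  with False show ?thesis
    by simp
qed

lemma sum_symmetric_circuit_matrix:
  assumes "\<pi> permutes J" "J \<subseteq> {1..n}"
  shows "sum_symmetric n (circuit_matrix J \<pi> c)"
  using assms by (simp add: sum_symmetric_def row_sum_circuit_matrix column_sum_circuit_matrix)

lemma sum_symmetric_diff:
  assumes "sum_symmetric n A" "sum_symmetric n B"
  shows "sum_symmetric n (A - B)"
  using assms by (simp add: sum_symmetric_def sum_subtractf)

lemma positive_in_imp_positive_out: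
  assumes "nonneg_matrix n T" "sum_symmetric n T"
    and "i \<in> {1..n}" "j \<in> {1..n}" "T j i > 0"
  shows "\<exists>k\<in>{1..n}. T i k > 0"
proof (rule ccontr)
  assume "\<not> ?thesis"
  then have "(\<Sum>k\<in>{1..n}. T i k) \<le> 0"
    by (intro sum_nonpos) (simp add: not_less)
  moreover have "(\<Sum>k\<in>{1..n}. T k i) > 0"
    using assms by (intro sum_pos2[of _ j]) (auto simp: nonneg_matrix_def)
  ultimately show False
    using assms(2,3) by (simp add: sum_symmetric_def)
qed

lemma positive_circuit_exists:
  assumes "nonneg_matrix n T" "sum_symmetric n T"
    and "i\<^sub>0 \<in> {1..n}" "j\<^sub>0 \<in> {1..n}" "T i\<^sub>0 j\<^sub>0 > 0"
  obtains J \<pi> where "J \<subseteq> {1..n}" "J \<noteq> {}" "cyclic_perm_on \<pi> J" "\<And>i. i \<in> J \<Longrightarrow> T i (\<pi> i) > 0"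
proof -
  define V where "V = {i \<in> {1..n}. \<exists>j\<in>{1..n}. T j i > 0}"
  have "\<forall>i\<in>V. \<exists>k. k \<in> {1..n} \<and> T i k > 0"
    using positive_in_imp_positive_out[OF assms(1,2)] unfolding V_def by blast
  then obtain f where f: "\<forall>i\<in>V. f i \<in> {1..n} \<and> T i (f i) > 0"
    by (rule bchoice[THEN exE])
  have "finite V" "j\<^sub>0 \<in> V"
    using assms(3-5) by (auto simp: V_def)
  moreover have "f ` V \<subseteq> V"
    using f unfolding V_def by blast
  ultimately obtain x where "x \<in> V" "x \<in> orbit f x"
    by (rule periodic_point_exists)
  define J where "J = orbit f x"
  have "J \<subseteq> V"
    unfolding J_def by (rule orbit_subset_closed) fact+
  have "cyclic_on f J"
    using \<open>x \<in> orbit f x\<close> unfolding J_def by (rule cyclic_on_singleI) simp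
  then have "cyclic_perm_on (perm_restrict f J) J"
    by (rule cyclic_perm_on_perm_restrict)
  moreover have "J \<subseteq> {1..n}"
    using \<open>J \<subseteq> V\<close> by (auto simp: V_def)
  moreover have "J \<noteq> {}"
    by (simp add: J_def orbit_nonempty)
  moreover have "T i (perm_restrict f J i) > 0" if "i \<in> J" for i
    using f \<open>J \<subseteq> V\<close> that by (auto simp: perm_restrict_simps)
  ultimately show thesis
    using that by blast
qed

lemma circuit_removal:
  assumes "nonneg_matrix n T" "sum_symmetric n T" "support n T \<noteq> {}"
  obtains C where "nonneg_circuit_matrix n C" "nonneg_matrix n (T - C)" "sum_symmetric n (T - C)"
    "support n (T - C) \<subset> support n T"
proof -
  obtain i\<^sub>0 j\<^sub>0 where "i\<^sub>0 \<in> {1..n}" "j\<^sub>0 \<in> {1..n}" "T i\<^sub>0 j\<^sub>0 > 0"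
    using assms(1,3) unfolding support_def nonneg_matrix_def by (auto simp: order.strict_iff_order)
  then obtain J \<pi> where J: "J \<subseteq> {1..n}" "J \<noteq> {}" "cyclic_perm_on \<pi> J"
    and pos: "\<And>i. i \<in> J \<Longrightarrow> T i (\<pi> i) > 0"
    using positive_circuit_exists[OF assms(1,2)] by blast
  have perm: "\<pi> permutes J"
    using J(3) by (simp add: cyclic_perm_on_def)
  have "finite J"
    using J(1) finite_subset by blast
  define c where "c = Min ((\<lambda>i. T i (\<pi> i)) ` J)"
  have "c \<in> (\<lambda>i. T i (\<pi> i)) ` J"
    unfolding c_def using \<open>finite J\<close> J(2) by (intro Min_in) auto
  then obtain i\<^sub>1 where i\<^sub>1: "i\<^sub>1 \<in> J" "T i\<^sub>1 (\<pi> i\<^sub>1) = c"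
    by (metis imageE)
  have c_le: "c \<le> T i (\<pi> i)" if "i \<in> J" for i
    unfolding c_def using \<open>finite J\<close> that by simp
  have "c > 0"
    using pos i\<^sub>1 by auto
  define C where "C = circuit_matrix J \<pi> c"
  have "(T - C) i j = 0" if "T i j = 0" for i j
    using that c_le[of i] \<open>c > 0\<close> by (auto simp: C_def circuit_matrix_def)
  then have "support n (T - C) \<subseteq> support n T"
    by (auto simp: support_def)
  moreover have "(i\<^sub>1, \<pi> i\<^sub>1) \<in> support n T - support n (T - C)"
    using i\<^sub>1 \<open>c > 0\<close> J(1) permutes_in_image[OF perm, of i\<^sub>1]
    by (auto simp: support_def C_def circuit_matrix_def)
  ultimately have "support n (T - C) \<subset> support n T"
    by blast
  moreover have "nonneg_matrix n (T - C)"
    using assms(1) c_le by (auto simp: nonneg_matrix_def C_def circuit_matrix_def)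
  moreover have "sum_symmetric n (T - C)"
    unfolding C_def using assms(2) perm J(1)
    by (intro sum_symmetric_diff sum_symmetric_circuit_matrix)
  moreover have "nonneg_circuit_matrix n C"
    unfolding C_def using J \<open>c > 0\<close> by (intro nonneg_circuit_matrix_circuit_matrix) auto
  ultimately show thesis
    using that by blast
qed

theorem theorem1:
  fixes n :: nat and T :: "nat \<Rightarrow> nat \<Rightarrow> 'a::linordered_ab_group_add"
  assumes "nonneg_matrix n T" and "sum_symmetric n T"
  shows "\<exists>Cs :: (nat \<Rightarrow> nat \<Rightarrow> 'a) list.
           (\<forall>C\<in>set Cs. nonneg_circuit_matrix n C) \<and>
           (\<forall>i\<in>{1..n}. \<forall>j\<in>{1..n}. T i j = (\<Sum>C\<leftarrow>Cs. C i j))"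
  using assms
proof (induction "card (support n T)" arbitrary: T rule: less_induct)
  case less
  show ?case
  proof (cases "support n T = {}")
    case True
    then show ?thesis
      by (intro exI[of _ "[]"]) (auto simp: support_def)
  next
    case False
    with less.prems obtain C where C: "nonneg_circuit_matrix n C"
      and rest: "nonneg_matrix n (T - C)" "sum_symmetric n (T - C)"
      and smaller: "support n (T - C) \<subset> support n T"
      by (rule circuit_removal)
    from less.hyps[OF psubset_card_mono[OF finite_support smaller] rest]
    obtain Cs where "\<forall>C\<in>set Cs. nonneg_circuit_matrix n C"
      and "\<forall>i\<in>{1..n}. \<forall>j\<in>{1..n}. (T - C) i j = (\<Sum>C\<leftarrow>Cs. C i j)"
      by blast
    with C show ?thesis
      by (intro exI[of _ "C # Cs"]) (auto simp: algebra_simps)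
  qed
qed

end
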